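(* If $\kappa$ is an uncountable cardinal with $\kappa=\kappa^{<\kappa}$, then every non-empty open subset of ${}^\kappa\kappa$ is equal to the image of ${}^\kappa\kappa$ under an injective continuous function ${}^\kappa\kappa\to{}^\kappa\kappa$.
   Context: ${}^\kappa\kappa$ carries the topology whose basic open sets are $N_s=\{x\in{}^\kappa\kappa : s\subseteq x\}$ for $s$ a function from some ordinal $\alpha<\kappa$ to $\kappa$. *)

theory Defs
  imports "HOL-Analysis.Analysis"
begin

text \<open>The cardinal kappa is represented by a type 'k carrying a cardinal order r
  (a well-order of UNIV that is an initial ordinal); ordinals below kappa are the
  elements of 'k, and alpha = {beta. beta <_r alpha} = underS r alpha.\<close>

definition short_seqs :: "'k rel \<Rightarrow> ('k \<rightharpoonup> 'k) set" where
  "short_seqs r = {s. \<exists>\<alpha>. dom s = underS r \<alpha>}"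

definition basic_nbhd :: "('k \<rightharpoonup> 'k) \<Rightarrow> ('k \<Rightarrow> 'k) set" where
  "basic_nbhd s = {x. \<forall>\<beta>\<in>dom s. s \<beta> = Some (x \<beta>)}"

definition baire_top :: "'k rel \<Rightarrow> ('k \<Rightarrow> 'k) topology" where
  "baire_top r = topology_generated_by (basic_nbhd ` short_seqs r)"

end

(* For z in the open set U let the radius of z be the least a such that every point agreeing
   with z below a lies in U, and let the stem of z be z restricted to the ordinals up to and
   including its radius. Two points of U with the same stem have the same radius, so the sets
   of points of U with a given stem are basic open sets partitioning U. By kappa^<kappa = kappa
   there are at most kappa stems, and at least kappa because the value at the radius can be
   changed freely. Identifying kappa with the final segment above an ordinal by an order
   isomorphism, x maps continuously and injectively onto the piece with stem number x(0),
   extended by the remaining values of x. *)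

theory Submission
  imports Defs
begin

unbundle cardinal_syntax
no_notation Set_Algebras.elt_set_eq (infix "=o" 50)

section \<open>Final segments of an infinite initial ordinal\<close>

locale infinite_card_order =
  fixes r :: "'k rel"
  assumes card_order: "card_order r"
    and infinite_UNIV: "infinite (UNIV :: 'k set)"
begin

lemma Well_order: "Well_order r"
  and Field_eq_UNIV: "Field r = UNIV"
  and Card_order: "Card_order r"
  using card_order card_order_on_Card_order card_order_on_well_order_on by blast+

lemma wo_rel: "wo_rel r"
  using Well_order wo_rel_def by blast

lemma r_refl [simp]: "(a, a) \<in> r"
  using Well_order Field_eq_UNIV
  unfolding well_order_on_def linear_order_on_def partial_order_on_def preorder_on_def refl_on_def
  by auto

lemma r_total: "(a, b) \<in> r \<or> (b, a) \<in> r"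
  using wo_rel.TOTALS[OF wo_rel] Field_eq_UNIV by auto

lemma r_trans: "(a, b) \<in> r \<Longrightarrow> (b, c) \<in> r \<Longrightarrow> (a, c) \<in> r"
  using wo_rel.TRANS[OF wo_rel] by (meson transE)

lemma r_antisym: "(a, b) \<in> r \<Longrightarrow> (b, a) \<in> r \<Longrightarrow> a = b"
  using wo_rel.ANTISYM[OF wo_rel] by (meson antisymD)

lemma not_le_imp_aboveS: "(b, a) \<notin> r \<Longrightarrow> b \<in> aboveS r a"
  unfolding aboveS_def using r_total by blast

lemma aboveS_imp_not_le: "b \<in> aboveS r a \<Longrightarrow> (b, a) \<notin> r"
  unfolding aboveS_def using r_antisym by blast

lemma underS_mono: "(a, b) \<in> r \<Longrightarrow> underS r a \<subseteq> underS r b"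
  unfolding underS_def using r_trans r_antisym by blast

lemma card_of_UNIV_ordIso: "|UNIV :: 'k set| =o r"
  using card_of_Field_ordIso[OF Card_order] by (simp add: Field_eq_UNIV)

lemma under_eq_underS_succ: "\<exists>b. under r a = underS r b"
proof -
  let ?A = "aboveS r a"
  obtain c where "a \<noteq> c" "(a, c) \<in> r"
    using infinite_Card_order_limit[OF Card_order, of a] infinite_UNIV by (auto simp: Field_eq_UNIV)
  then have "?A \<noteq> {}"
    by (auto simp: aboveS_def)
  then have b: "wo_rel.minim r ?A \<in> ?A" and least: "\<And>c. c \<in> ?A \<Longrightarrow> (wo_rel.minim r ?A, c) \<in> r"
    using wo_rel.minim_in[OF wo_rel] wo_rel.minim_least[OF wo_rel] Field_eq_UNIV by auto
  have "under r a = underS r (wo_rel.minim r ?A)"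
  proof safe
    fix c assume "c \<in> under r a"
    then show "c \<in> underS r (wo_rel.minim r ?A)"
      using b by (auto simp: under_def underS_def aboveS_def dest: r_trans r_antisym)
  next
    fix c assume c: "c \<in> underS r (wo_rel.minim r ?A)"
    show "c \<in> under r a"
    proof (rule ccontr)
      assume "c \<notin> under r a"
      then have "c \<in> ?A" using not_le_imp_aboveS by (auto simp: under_def)
      then show False using least c r_antisym by (auto simp: underS_def)
    qed
  qed
  then show ?thesis by blast
qed

lemma card_of_under_ordLess: "|under r a| <o r"
  using under_eq_underS_succ[of a] card_of_underS[OF Card_order] Field_eq_UNIV by auto

lemma card_of_aboveS_ordIso: "|aboveS r a| =o r"
proof -
  have UNIV_eq: "UNIV = under r a \<union> aboveS r a"
    using not_le_imp_aboveS by (auto simp: under_def)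
  have "\<not> |aboveS r a| <o r"
  proof
    assume "|aboveS r a| <o r"
    then have "|UNIV :: 'k set| <o r"
      using card_of_Un_ordLess_infinite_Field[OF _ Card_order card_of_under_ordLess]
        Field_eq_UNIV infinite_UNIV UNIV_eq by metis
    then show False
      using card_of_UNIV_ordIso not_ordLess_ordIso by blast
  qed
  then have "r \<le>o |aboveS r a|"
    using Well_order card_of_Well_order ordLess_or_ordLeq by metis
  moreover have "|aboveS r a| \<le>o r"
    using card_of_mono1[of "aboveS r a" UNIV] card_of_UNIV_ordIso ordLeq_ordIso_trans by blast
  ultimately show ?thesis
    using ordIso_iff_ordLeq by blast
qed

text \<open>\<open>\<kappa>\<close> embeds into the final segment, which has size \<open>\<kappa>\<close>; the image is an initial
  segment of it, and not a proper one, since those have size less than \<open>\<kappa>\<close>.\<close>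

lemma aboveS_order_iso:
  "\<exists>e. bij_betw e UNIV (aboveS r a) \<and> (\<forall>x y. (e x, e y) \<in> r \<longleftrightarrow> (x, y) \<in> r)"
proof -
  let ?A = "aboveS r a"
  let ?R = "Restr r ?A"
  have WR: "Well_order ?R"
    using Well_order_Restr Well_order by blast
  have Field_R: "Field ?R = ?A"
  proof (rule subset_antisym[OF Field_Restr_subset], rule subsetI)
    fix x assume "x \<in> ?A"
    then show "x \<in> Field ?R"
      by (intro FieldI1[of x x]) simp
  qed
  have "|?A| \<le>o ?R"
    using card_of_least[OF WR] unfolding Field_R .
  then have "r \<le>o ?R"
    using ordIso_ordLeq_trans[OF ordIso_symmetric[OF card_of_aboveS_ordIso]] by blast
  then obtain e where emb: "embed r ?R e"
    unfolding ordLeq_def by blast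
  have inj: "inj e"
    using embed_inj_on[OF Well_order emb] Field_eq_UNIV by simp
  have ofilter: "wo_rel.ofilter ?R (range e)"
    using embed_Field_ofilter[OF Well_order WR emb] Field_eq_UNIV by simp
  have "range e = ?A"
  proof (rule ccontr)
    assume "range e \<noteq> ?A"
    then obtain b where "range e = underS ?R b"
      using ofilter wo_rel.ofilter_underS_Field[of ?R] WR Field_R unfolding wo_rel_def by auto
    then have "range e \<subseteq> underS r b"
      by (auto simp: underS_def)
    then have "|UNIV :: 'k set| \<le>o |underS r b|"
      using card_of_ordLeq inj by blast
    also have "|underS r b| <o r"
      using card_of_underS[OF Card_order] Field_eq_UNIV by simp
    also have "r =o |UNIV :: 'k set|"
      using ordIso_symmetric[OF card_of_UNIV_ordIso] .
    finally show False
      using ordLess_irreflexive by blast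
  qed
  then have "iso r ?R e"
    unfolding iso_iff[OF Well_order] Field_eq_UNIV Field_R using emb by simp
  then have bij: "bij_betw e UNIV ?A" and "\<forall>x\<in>UNIV. \<forall>y\<in>UNIV. (x, y) \<in> r \<longleftrightarrow> (e x, e y) \<in> ?R"
    unfolding iso_iff2 Field_eq_UNIV Field_R by blast+
  moreover have "(e x, e y) \<in> ?R \<longleftrightarrow> (e x, e y) \<in> r" for x y
    using bij_betwE[OF bij] by blast
  ultimately show ?thesis
    by blast
qed

definition shift :: "'k \<Rightarrow> 'k \<Rightarrow> 'k" where
  "shift a = (SOME e. bij_betw e UNIV (aboveS r a) \<and> (\<forall>x y. (e x, e y) \<in> r \<longleftrightarrow> (x, y) \<in> r))"

definition unshift :: "'k \<Rightarrow> 'k \<Rightarrow> 'k" where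
  "unshift a = inv_into UNIV (shift a)"

lemma bij_betw_shift: "bij_betw (shift a) UNIV (aboveS r a)"
  and shift_le_iff [simp]: "(shift a x, shift a y) \<in> r \<longleftrightarrow> (x, y) \<in> r"
  using someI_ex[OF aboveS_order_iso[of a]] unfolding shift_def by blast+

lemma shift_in_aboveS: "shift a x \<in> aboveS r a"
  using bij_betw_shift bij_betwE by blast

lemma shift_eq_iff [simp]: "shift a x = shift a y \<longleftrightarrow> x = y"
  using bij_betw_shift bij_betw_imp_inj_on injD by metis

lemma unshift_shift [simp]: "unshift a (shift a x) = x"
  unfolding unshift_def using bij_betw_shift bij_betw_imp_inj_on inv_into_f_f by (metis UNIV_I)

lemma shift_unshift: "b \<in> aboveS r a \<Longrightarrow> shift a (unshift a b) = b"
  unfolding unshift_def using bij_betw_shift bij_betw_inv_into_right by metis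

lemma shift_in_underS_iff [simp]: "shift a x \<in> underS r (shift a y) \<longleftrightarrow> x \<in> underS r y"
  unfolding underS_def by simp

lemma unshift_in_underS:
  "b \<in> aboveS r a \<Longrightarrow> c \<in> aboveS r a \<Longrightarrow> b \<in> underS r c \<Longrightarrow> unshift a b \<in> underS r (unshift a c)"
  using shift_in_underS_iff[of a "unshift a b" "unshift a c"] shift_unshift by simp

definition zero :: 'k where
  "zero = wo_rel.minim r UNIV"

lemma zero_least: "(zero, a) \<in> r"
  unfolding zero_def using wo_rel.minim_least[OF wo_rel] Field_eq_UNIV by simp

lemma zero_in_underS_shift: "zero \<in> underS r (shift zero x)"
  using shift_in_aboveS[of zero x] by (auto simp: aboveS_def underS_def)

definition tail :: "('k \<Rightarrow> 'k) \<Rightarrow> 'k \<Rightarrow> 'k" where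
  "tail x = x \<circ> shift zero"

lemma eq_iff_zero_tail: "x = y \<longleftrightarrow> x zero = y zero \<and> tail x = tail y"
proof safe
  assume zero: "x zero = y zero" and tail: "tail x = tail y"
  show "x = y"
  proof
    fix p show "x p = y p"
    proof (cases "p = zero")
      case False
      then have p: "p \<in> aboveS r zero"
        using zero_least unfolding aboveS_def by blast
      have "x (shift zero (unshift zero p)) = y (shift zero (unshift zero p))"
        using fun_cong[OF tail, of "unshift zero p"] by (simp add: tail_def)
      then show ?thesis
        by (simp add: shift_unshift[OF p])
    qed (simp add: zero)
  qed
qed

lemma exists_zero_tail: "\<exists>x. x zero = v \<and> tail x = t"
proof -
  have "shift zero c \<noteq> zero" for c
    using zero_in_underS_shift[of c] by (auto simp: underS_def)
  then show ?thesis
    by (intro exI[of _ "\<lambda>p. if p = zero then v else t (unshift zero p)"]) (auto simp: tail_def)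
qed

text \<open>\<^term>\<open>graft a z\<close> is a homeomorphism of \<open>\<^sup>\<kappa>\<kappa>\<close> onto the points agreeing with \<open>z\<close>
  up to and including \<open>a\<close>.\<close>

definition graft :: "'k \<Rightarrow> ('k \<Rightarrow> 'k) \<Rightarrow> ('k \<Rightarrow> 'k) \<Rightarrow> 'k \<Rightarrow> 'k" where
  "graft a z y = (\<lambda>b. if (b, a) \<in> r then z b else y (unshift a b))"

lemma graft_le: "(b, a) \<in> r \<Longrightarrow> graft a z y b = z b"
  unfolding graft_def by simp

lemma graft_shift [simp]: "graft a z y (shift a c) = y c"
  unfolding graft_def using shift_in_aboveS aboveS_imp_not_le by simp

lemma inj_graft: "inj (graft a z)"
proof (rule injI)
  fix y y' assume eq: "graft a z y = graft a z y'"
  show "y = y'"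
  proof
    fix c show "y c = y' c"
      using fun_cong[OF eq, of "shift a c"] by simp
  qed
qed

lemma graft_eqI:
  assumes "\<And>b. (b, a) \<in> r \<Longrightarrow> x b = z b"
  shows "graft a z (x \<circ> shift a) = x"
proof
  fix b show "graft a z (x \<circ> shift a) b = x b"
    using assms shift_unshift[OF not_le_imp_aboveS] by (simp add: graft_def)
qed

end

section \<open>Neighbourhoods in the bounded topology\<close>

definition baire_nbhd :: "'k rel \<Rightarrow> ('k \<Rightarrow> 'k) \<Rightarrow> 'k \<Rightarrow> ('k \<Rightarrow> 'k) set" where
  "baire_nbhd r x a = {y. \<forall>b\<in>underS r a. y b = x b}"

lemma in_baire_nbhd_self [simp]: "x \<in> baire_nbhd r x a"
  by (simp add: baire_nbhd_def)

lemma baire_nbhd_in_basis: "baire_nbhd r x a \<in> basic_nbhd ` short_seqs r"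
proof
  let ?s = "\<lambda>b. if b \<in> underS r a then Some (x b) else None"
  show "?s \<in> short_seqs r" and "baire_nbhd r x a = basic_nbhd ?s"
    by (auto simp: baire_nbhd_def basic_nbhd_def short_seqs_def dom_def split: if_splits)
qed

lemma openin_baire_nbhd: "openin (baire_top r) (baire_nbhd r x a)"
  unfolding baire_top_def by (rule topology_generated_by_Basis[OF baire_nbhd_in_basis])

lemma topspace_baire_top [simp]: "topspace (baire_top r) = UNIV"
proof -
  have "x \<in> \<Union> (basic_nbhd ` short_seqs r)" for x
    using UnionI[OF baire_nbhd_in_basis in_baire_nbhd_self] .
  then show ?thesis
    unfolding baire_top_def topology_generated_by_topspace by blast
qed

lemma basic_nbhd_eq_baire_nbhd:
  assumes "s \<in> short_seqs r" and "x \<in> basic_nbhd s"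
  shows "\<exists>a. basic_nbhd s = baire_nbhd r x a"
proof -
  obtain a where "dom s = underS r a"
    using assms(1) unfolding short_seqs_def by blast
  then have "basic_nbhd s = baire_nbhd r x a"
    using assms(2) unfolding basic_nbhd_def baire_nbhd_def by auto
  then show ?thesis by blast
qed

context infinite_card_order
begin

lemma baire_nbhd_antimono: "(a, b) \<in> r \<Longrightarrow> baire_nbhd r x b \<subseteq> baire_nbhd r x a"
  using underS_mono unfolding baire_nbhd_def by blast

lemma baire_nbhd_eq: "(b, a) \<in> r \<Longrightarrow> y \<in> baire_nbhd r x a \<Longrightarrow> baire_nbhd r y b = baire_nbhd r x b"
  using underS_mono[of b a] unfolding baire_nbhd_def by auto

lemma openin_baire_topD:
  assumes "openin (baire_top r) U" and "x \<in> U"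
  shows "\<exists>a. baire_nbhd r x a \<subseteq> U"
proof -
  have "generate_topology_on (basic_nbhd ` short_seqs r) U"
    using assms(1) unfolding baire_top_def by (rule openin_topology_generated_by)
  then have "\<forall>x\<in>U. \<exists>a. baire_nbhd r x a \<subseteq> U"
  proof induction
    case (Int S T)
    show ?case
    proof
      fix x assume "x \<in> S \<inter> T"
      then obtain a b where a: "baire_nbhd r x a \<subseteq> S" and b: "baire_nbhd r x b \<subseteq> T"
        using Int.IH by blast
      show "\<exists>c. baire_nbhd r x c \<subseteq> S \<inter> T"
      proof (cases "(a, b) \<in> r")
        case True
        then show ?thesis
          using a b baire_nbhd_antimono[of a b x] by blast
      next
        case False
        then show ?thesis
          using a b baire_nbhd_antimono[of b a x] r_total by blast
      qed
    qed
  next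
    case (UN K)
    then show ?case by blast
  next
    case (Basis s)
    then obtain t where t: "t \<in> short_seqs r" "s = basic_nbhd t"
      by blast
    show ?case
    proof
      fix x assume "x \<in> s"
      then obtain a where "basic_nbhd t = baire_nbhd r x a"
        using basic_nbhd_eq_baire_nbhd[OF t(1)] t(2) by blast
      then show "\<exists>a. baire_nbhd r x a \<subseteq> s"
        using t(2) by auto
    qed
  qed simp
  then show ?thesis
    using assms(2) by blast
qed

lemma openin_baire_topI:
  assumes "\<And>x. x \<in> U \<Longrightarrow> \<exists>a. baire_nbhd r x a \<subseteq> U"
  shows "openin (baire_top r) U"
proof -
  have "\<exists>T. openin (baire_top r) T \<and> x \<in> T \<and> T \<subseteq> U" if x: "x \<in> U" for x
  proof -
    obtain a where "baire_nbhd r x a \<subseteq> U"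
      using assms[OF x] by blast
    then show ?thesis
      using openin_baire_nbhd[of r x a] in_baire_nbhd_self[of x r a] by blast
  qed
  then show ?thesis
    by (simp only: openin_subopen[of "baire_top r" U]) blast
qed

lemma continuous_map_baire_topI:
  assumes "\<And>x c. \<exists>d. \<forall>y\<in>baire_nbhd r x d. f y \<in> baire_nbhd r (f x) c"
  shows "continuous_map (baire_top r) (baire_top r) f"
  unfolding continuous_map_def
proof (intro conjI allI impI)
  show "f \<in> topspace (baire_top r) \<rightarrow> topspace (baire_top r)"
    by simp
  fix V assume V: "openin (baire_top r) V"
  have "\<exists>d. baire_nbhd r x d \<subseteq> {x \<in> topspace (baire_top r). f x \<in> V}" if fx: "f x \<in> V" for x
  proof -
    obtain c where c: "baire_nbhd r (f x) c \<subseteq> V"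
      using openin_baire_topD[OF V fx] by blast
    obtain d where "\<forall>y\<in>baire_nbhd r x d. f y \<in> baire_nbhd r (f x) c"
      using assms by blast
    then show ?thesis
      using c by auto
  qed
  then show "openin (baire_top r) {x \<in> topspace (baire_top r). f x \<in> V}"
    by (intro openin_baire_topI) simp
qed

lemma graft_continuous_at:
  "\<exists>d. \<forall>y'\<in>baire_nbhd r y d. graft a z y' \<in> baire_nbhd r (graft a z y) c"
proof
  let ?d = "if c \<in> aboveS r a then unshift a c else zero"
  show "\<forall>y'\<in>baire_nbhd r y ?d. graft a z y' \<in> baire_nbhd r (graft a z y) c"
  proof (intro ballI, unfold baire_nbhd_def, safe)
    fix y' b assume y': "\<forall>e\<in>underS r ?d. y' e = y e" and b: "b \<in> underS r c"
    show "graft a z y' b = graft a z y b"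
    proof (cases "(b, a) \<in> r")
      case False
      then have ba: "b \<in> aboveS r a"
        by (rule not_le_imp_aboveS)
      have "(c, a) \<notin> r"
        using False b r_trans unfolding underS_def by blast
      then have ca: "c \<in> aboveS r a"
        by (rule not_le_imp_aboveS)
      have "y' (unshift a b) = y (unshift a b)"
        using y' ca unshift_in_underS[OF ba ca b] by simp
      then show ?thesis
        using False by (simp add: graft_def)
    qed (simp add: graft_le)
  qed
qed

lemma tail_in_baire_nbhd: "y \<in> baire_nbhd r x (shift zero d) \<Longrightarrow> tail y \<in> baire_nbhd r (tail x) d"
  unfolding baire_nbhd_def tail_def by simp

end

section \<open>Decomposing an open set into basic open sets\<close>

locale baire_open_set = infinite_card_order r for r :: "'k rel" +
  fixes U :: "('k \<Rightarrow> 'k) set"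
  assumes openin_U: "openin (baire_top r) U"
begin

definition radius :: "('k \<Rightarrow> 'k) \<Rightarrow> 'k" where
  "radius z = wo_rel.minim r {a. baire_nbhd r z a \<subseteq> U}"

lemma baire_nbhd_radius_subset: "z \<in> U \<Longrightarrow> baire_nbhd r z (radius z) \<subseteq> U"
proof -
  assume "z \<in> U"
  then have ne: "{a. baire_nbhd r z a \<subseteq> U} \<noteq> {}"
    using openin_baire_topD[OF openin_U] by blast
  have "wo_rel.minim r {a. baire_nbhd r z a \<subseteq> U} \<in> {a. baire_nbhd r z a \<subseteq> U}"
    using wo_rel.minim_in[OF wo_rel _ ne] by (simp add: Field_eq_UNIV)
  then show ?thesis
    unfolding radius_def by simp
qed

lemma radius_least: "baire_nbhd r z a \<subseteq> U \<Longrightarrow> (radius z, a) \<in> r"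
  unfolding radius_def using wo_rel.minim_least[OF wo_rel] Field_eq_UNIV by simp

lemma radius_eqI:
  assumes z: "z \<in> U" and y: "y \<in> baire_nbhd r z (radius z)"
  shows "y \<in> U" and "radius y = radius z"
proof -
  show y_in: "y \<in> U"
    using baire_nbhd_radius_subset[OF z] y by blast
  have "baire_nbhd r y (radius z) \<subseteq> U"
    using baire_nbhd_eq[OF r_refl y] baire_nbhd_radius_subset[OF z] by simp
  then have le: "(radius y, radius z) \<in> r"
    by (rule radius_least)
  have "baire_nbhd r z (radius y) \<subseteq> U"
    using baire_nbhd_eq[OF le y] baire_nbhd_radius_subset[OF y_in] by simp
  then have "(radius z, radius y) \<in> r"
    by (rule radius_least)
  then show "radius y = radius z"
    using le r_antisym by blast
qed

text \<open>The value at the radius itself is included so that there are \<open>\<kappa>\<close> many stems.\<close>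

definition stem :: "('k \<Rightarrow> 'k) \<Rightarrow> 'k \<rightharpoonup> 'k" where
  "stem z = (\<lambda>b. if (b, radius z) \<in> r then Some (z b) else None)"

lemma dom_stem: "dom (stem z) = under r (radius z)"
  unfolding stem_def dom_def under_def by auto

lemma stem_in_short_seqs: "stem z \<in> short_seqs r"
proof -
  obtain b where "under r (radius z) = underS r b"
    using under_eq_underS_succ by blast
  then show ?thesis
    unfolding short_seqs_def by (intro CollectI exI[of _ b]) (simp add: dom_stem)
qed

lemma stem_eqI:
  assumes "z \<in> U" and "\<And>b. (b, radius z) \<in> r \<Longrightarrow> y b = z b"
  shows "y \<in> U" and "stem y = stem z"
proof -
  have y: "y \<in> baire_nbhd r z (radius z)"
    using assms(2) unfolding baire_nbhd_def underS_def by blast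
  show "y \<in> U"
    using radius_eqI(1)[OF assms(1) y] .
  show "stem y = stem z"
    using radius_eqI(2)[OF assms(1) y] assms(2) unfolding stem_def by auto
qed

lemma stem_eqD:
  assumes "stem y = stem z"
  shows "radius y = radius z" and "\<And>b. (b, radius z) \<in> r \<Longrightarrow> y b = z b"
proof -
  have "radius y \<in> under r (radius z)" and "radius z \<in> under r (radius y)"
    using dom_stem[of y] dom_stem[of z] unfolding assms by (auto simp: under_def)
  then show radius_eq: "radius y = radius z"
    unfolding under_def using r_antisym by blast
  fix b assume "(b, radius z) \<in> r"
  then show "y b = z b"
    using fun_cong[OF assms, of b] radius_eq unfolding stem_def by simp
qed

lemma card_of_stems:
  assumes "|short_seqs r| =o |UNIV :: 'k set|" and "U \<noteq> {}"
  shows "|stem ` U| =o |UNIV :: 'k set|"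
proof -
  have "|stem ` U| \<le>o |short_seqs r|"
    using stem_in_short_seqs by (intro card_of_mono1) blast
  then have upper: "|stem ` U| \<le>o |UNIV :: 'k set|"
    using assms(1) ordLeq_ordIso_trans by blast
  obtain z where z: "z \<in> U"
    using assms(2) by blast
  let ?g = "\<lambda>v. stem (z(radius z := v))"
  have in_nbhd: "z(radius z := v) \<in> baire_nbhd r z (radius z)" for v
    unfolding baire_nbhd_def underS_def by simp
  have g_at_radius: "?g v (radius z) = Some v" for v
    using radius_eqI(2)[OF z in_nbhd] unfolding stem_def by simp
  have "inj ?g"
    by (rule inj_on_inverseI[where g = "\<lambda>s. the (s (radius z))"]) (simp add: g_at_radius)
  moreover have "range ?g \<subseteq> stem ` U"
    by (intro image_subsetI imageI radius_eqI(1)[OF z in_nbhd])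
  ultimately have "|UNIV :: 'k set| \<le>o |stem ` U|"
    using card_of_ordLeq by blast
  then show ?thesis
    using upper ordIso_iff_ordLeq by blast
qed

lemma exists_stem_enumeration:
  assumes "|short_seqs r| =o |UNIV :: 'k set|" and "U \<noteq> {}"
  shows "\<exists>g :: 'k \<Rightarrow> 'k \<Rightarrow> 'k. range g \<subseteq> U \<and> bij_betw (stem \<circ> g) UNIV (stem ` U)"
proof -
  have "|UNIV :: 'k set| =o |stem ` U|"
    using ordIso_symmetric[OF card_of_stems[OF assms]] .
  then obtain h :: "'k \<Rightarrow> 'k \<rightharpoonup> 'k" where h: "bij_betw h UNIV (stem ` U)"
    unfolding card_of_ordIso[symmetric] by blast
  define g where "g = inv_into U stem \<circ> h"
  have h_in: "h v \<in> stem ` U" for v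
    using bij_betwE[OF h] by blast
  have range_g: "range g \<subseteq> U"
    unfolding g_def using h_in by (auto intro: inv_into_into)
  have "stem \<circ> g = h"
    unfolding g_def using h_in by (simp add: fun_eq_iff f_inv_into_f)
  then have bij_g: "bij_betw (stem \<circ> g) UNIV (stem ` U)"
    using h by (simp only:)
  show ?thesis
    by (intro exI[of _ g] conjI range_g bij_g)
qed

definition glue :: "('k \<Rightarrow> 'k \<Rightarrow> 'k) \<Rightarrow> ('k \<Rightarrow> 'k) \<Rightarrow> 'k \<Rightarrow> 'k" where
  "glue g x = graft (radius (g (x zero))) (g (x zero)) (tail x)"

lemma glue_in_U:
  assumes "range g \<subseteq> U"
  shows "glue g x \<in> U" and "stem (glue g x) = stem (g (x zero))"
proof -
  have "g (x zero) \<in> U"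
    using assms by blast
  moreover have "glue g x b = g (x zero) b" if "(b, radius (g (x zero))) \<in> r" for b
    unfolding glue_def using graft_le[OF that] .
  ultimately show "glue g x \<in> U" and "stem (glue g x) = stem (g (x zero))"
    using stem_eqI by blast+
qed

lemma inj_glue:
  assumes "range g \<subseteq> U" and "inj (stem \<circ> g)"
  shows "inj (glue g)"
proof (rule injI)
  fix x y assume eq: "glue g x = glue g y"
  have "(stem \<circ> g) (x zero) = (stem \<circ> g) (y zero)"
    using glue_in_U(2)[OF assms(1), of x] glue_in_U(2)[OF assms(1), of y] by (simp add: eq)
  then have zero_eq: "x zero = y zero"
    by (rule injD[OF assms(2)])
  have "graft (radius (g (y zero))) (g (y zero)) (tail x) = graft (radius (g (y zero))) (g (y zero)) (tail y)"
    using eq unfolding glue_def zero_eq .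
  then have tail_eq: "tail x = tail y"
    by (rule injD[OF inj_graft])
  show "x = y"
    by (subst eq_iff_zero_tail) (intro conjI zero_eq tail_eq)
qed

lemma range_glue:
  assumes "range g \<subseteq> U" and "bij_betw (stem \<circ> g) UNIV (stem ` U)"
  shows "range (glue g) = U"
proof
  show "range (glue g) \<subseteq> U"
    using glue_in_U(1)[OF assms(1)] by blast
  show "U \<subseteq> range (glue g)"
  proof
    fix z assume "z \<in> U"
    then obtain v where v: "stem (g v) = stem z"
      using bij_betw_imp_surj_on[OF assms(2)] by (metis comp_apply imageE imageI)
    obtain x where x: "x zero = v" "tail x = z \<circ> shift (radius (g v))"
      using exists_zero_tail by blast
    have "glue g x = graft (radius z) (g v) (z \<circ> shift (radius z))"
      unfolding glue_def x stem_eqD(1)[OF v] ..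
    also have "\<dots> = z"
      using stem_eqD(2)[OF v[symmetric]] stem_eqD(1)[OF v] by (intro graft_eqI) simp
    finally show "z \<in> range (glue g)"
      by blast
  qed
qed

lemma continuous_map_glue: "continuous_map (baire_top r) (baire_top r) (glue g)"
proof (rule continuous_map_baire_topI)
  fix x c
  let ?a = "radius (g (x zero))"
  obtain d where d: "\<forall>t\<in>baire_nbhd r (tail x) d.
      graft ?a (g (x zero)) t \<in> baire_nbhd r (graft ?a (g (x zero)) (tail x)) c"
    using graft_continuous_at by blast
  have "glue g y \<in> baire_nbhd r (glue g x) c" if y: "y \<in> baire_nbhd r x (shift zero d)" for y
  proof -
    have "y zero = x zero"
      using y zero_in_underS_shift unfolding baire_nbhd_def by blast
    then show ?thesis
      using d tail_in_baire_nbhd[OF y] unfolding glue_def by simp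
  qed
  then show "\<exists>d. \<forall>y\<in>baire_nbhd r x d. glue g y \<in> baire_nbhd r (glue g x) c"
    by blast
qed

end

theorem proposition1p7:
  fixes r :: "'k rel" and U :: "('k \<Rightarrow> 'k) set"
  assumes "card_order r"
    and "\<not> countable (UNIV :: 'k set)"
    and "(card_of (short_seqs r), card_of (UNIV :: 'k set)) \<in> ordIso"
    and "openin (baire_top r) U" and "U \<noteq> {}"
  shows "\<exists>f :: ('k \<Rightarrow> 'k) \<Rightarrow> ('k \<Rightarrow> 'k).
           continuous_map (baire_top r) (baire_top r) f \<and> inj f \<and> f ` UNIV = U"
proof -
  have "infinite (UNIV :: 'k set)"
    using assms(2) countable_finite by blast
  then interpret baire_open_set r U
    using assms(1,4) by unfold_locales
  obtain g :: "'k \<Rightarrow> 'k \<Rightarrow> 'k"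
    where g_range: "range g \<subseteq> U" and g_bij: "bij_betw (stem \<circ> g) UNIV (stem ` U)"
    using exists_stem_enumeration[OF assms(3,5)] by blast
  show ?thesis
    by (intro exI[of _ "glue g"] conjI continuous_map_glue range_glue[OF g_range g_bij]
        inj_glue[OF g_range bij_betw_imp_inj_on[OF g_bij]])
qed

end
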